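(* Let $N\in\mathbb Z_{\ge1}$, $m\in\mathbb Z$, $\xi$ a primitive $k$th root of unity, $s:=\lfloor N/k\rfloor$, $M:=s+m\ge0$, and $N_k\in\{0,\dots,k-1\}$ with $N_k\equiv N\bmod k$. Then $$A_m(\xi,N)=\frac{(-1)^s\xi^{-m}}{k^{2s+1}s!}\Big[\prod_{w=N_k+1}^{k-1}(1-\xi^w)\Big]\sum_{1j_1+2j_2+\dots+Mj_M=M}\frac{1}{j_1!\cdots j_M!}\,X_1^{j_1}X_2^{j_2}\cdots X_M^{j_M},$$ where the sum is over $j_1,\dots,j_M\in\mathbb Z_{\ge0}$ (replaced by $1$ when $M=0$), $$X_1:=-m-\frac{N(N+1)}2-\sum_{r=0}^{k-1}\frac{\beta_1(\xi^r)S_{1,r}(m,N)}{1\cdot1!},\qquad X_n:=-\sum_{r=0}^{k-1}\frac{\beta_n(\xi^r)S_{n,r}(m,N)}{n\cdot n!}\ (n\ge2).$$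
   Context: $(q)_N:=(1-q)\cdots(1-q^N)$ and $A_m(\xi,N)$ is the coefficient of $(q-\xi)^m$ in the Laurent expansion of $1/(q)_N$ about $q=\xi$. Apostol–Bernoulli numbers: $\frac{z}{\rho e^z-1}=\sum_{n\ge0}\beta_n(\rho)z^n/n!$ (so $\beta_n(1)=B_n$). For fixed $k$, $S_{n,r}(m,N):=\delta_{0,r}(m+1)+\sum_{1\le j\le N,\ j\equiv r\bmod k}j^n$, with $\delta$ the Kronecker delta. Empty products equal $1$. *)

theory Defs
  imports "HOL-Complex_Analysis.Complex_Analysis"
begin

definition qpoch :: "complex \<Rightarrow> nat \<Rightarrow> complex" where
  "qpoch q N = (\<Prod>i=1..N. 1 - q ^ i)"

definition A_coeff :: "int \<Rightarrow> complex \<Rightarrow> nat \<Rightarrow> complex" where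
  "A_coeff m \<xi> N = fls_nth (laurent_expansion (\<lambda>q. 1 / qpoch q N) \<xi>) m"

definition apostol_bernoulli :: "nat \<Rightarrow> complex \<Rightarrow> complex" where
  "apostol_bernoulli n \<rho> =
     fact n * fls_nth (laurent_expansion (\<lambda>z. z / (\<rho> * exp z - 1)) 0) (int n)"

definition S_sum :: "nat \<Rightarrow> nat \<Rightarrow> nat \<Rightarrow> int \<Rightarrow> nat \<Rightarrow> complex" where
  "S_sum k n r m N =
     (if r = 0 then of_int (m + 1) else 0) +
     (\<Sum>j\<in>{j. 1 \<le> j \<and> j \<le> N \<and> j mod k = r mod k}. of_nat j ^ n)"

definition X_term :: "nat \<Rightarrow> complex \<Rightarrow> int \<Rightarrow> nat \<Rightarrow> nat \<Rightarrow> complex" where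
  "X_term k \<xi> m N n =
     (if n = 1 then - of_int m - of_nat (N * (N + 1)) / 2 else 0)
     - (\<Sum>r=0..k-1. apostol_bernoulli n (\<xi> ^ r) * S_sum k n r m N / (of_nat n * fact n))"

text \<open>Tuples (j_1,...,j_M) of nonnegative integers with 1 j_1 + ... + M j_M = M,
  represented as functions nat => nat vanishing outside {1..M}.\<close>
definition weighted_partitions :: "nat \<Rightarrow> (nat \<Rightarrow> nat) set" where
  "weighted_partitions M =
     {j. (\<forall>i. i \<notin> {1..M} \<longrightarrow> j i = 0) \<and> (\<Sum>i=1..M. i * j i) = M}"

end

theory Submission
  imports Defs
begin

unbundle no vec_syntax
unbundle fps_syntax

text \<open>
  Substitute \<open>q = \<xi> e\<^sup>z\<close>. Since \<open>q - \<xi> = \<xi>(e\<^sup>z - 1)\<close> has a simple zero at \<open>z = 0\<close>, the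
  coefficient \<open>A\<^sub>m\<close>, a residue in \<open>q\<close>, becomes a residue in \<open>z\<close>. Each factor satisfies
  \<open>1 - q\<^sup>i = - i z / D\<^sub>i(z)\<close> with \<open>D\<^sub>i(z) = i z / (\<xi>\<^sup>i e\<^sup>i\<^sup>z - 1) = \<Sum>\<^sub>n \<beta>\<^sub>n(\<xi>\<^sup>i) (i z)\<^sup>n / n!\<close>, which is a
  unit of \<open>\<complex>[[z]]\<close> if \<open>k\<close> divides \<open>i\<close> and has a simple zero otherwise. Hence \<open>A\<^sub>m\<close> is a constant
  times the \<open>z\<^sup>M\<close>-coefficient, \<open>M = s + m\<close>, of \<open>W = B(z)\<^sup>m\<^sup>+\<^sup>1 \<Prod>\<^sub>i D\<^sub>i(z) e\<^sup>z\<close> normalised to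
  constant term \<open>1\<close>, where \<open>B(z) = z / (e\<^sup>z - 1)\<close> comes from \<open>(q - \<xi>)\<^sup>-\<^sup>m\<^sup>-\<^sup>1\<close>.
  Grouping the indices \<open>i\<close> by their residue mod \<open>k\<close> shows that the logarithmic derivative
  of \<open>W\<close> is \<open>\<Sum>\<^sub>n n X\<^sub>n z\<^sup>n\<^sup>-\<^sup>1\<close>, so \<open>W = exp (\<Sum>\<^sub>n X\<^sub>n z\<^sup>n)\<close>, whose \<open>z\<^sup>M\<close>-coefficient
  is the sum over weighted partitions. The constant is the product of the leading coefficients
  \<open>i / (\<xi>\<^sup>i - 1)\<close> of the \<open>D\<^sub>i\<close>, evaluated with \<open>\<Prod>\<^sub>w\<^sub>=\<^sub>1\<^sup>k\<^sup>-\<^sup>1 (1 - \<xi>\<^sup>w) = k\<close>.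
\<close>

section \<open>The exponential formula for power series\<close>

lemma fps_nth_eq_if_same_log_deriv:
  fixes A B P Q :: "'a :: field_char_0 fps"
  assumes "A $ 0 = B $ 0" "fps_deriv A = A * P" "fps_deriv B = B * Q"
    and "\<forall>n<M. P $ n = Q $ n" "n \<le> M"
  shows "A $ n = B $ n"
  using \<open>n \<le> M\<close>
proof (induction n rule: less_induct)
  case (less n)
  show ?case
  proof (cases n)
    case 0
    then show ?thesis using assms(1) by simp
  next
    case (Suc n')
    have "of_nat (n' + 1) * A $ (n' + 1) = (A * P) $ n'"
      using arg_cong[OF assms(2), of "\<lambda>F. F $ n'"] by simp
    also have "\<dots> = (\<Sum>i=0..n'. A $ i * P $ (n' - i))" by (simp add: fps_mult_nth)
    also have "\<dots> = (\<Sum>i=0..n'. B $ i * Q $ (n' - i))"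
      using less Suc assms(4) by (intro sum.cong) auto
    also have "\<dots> = (B * Q) $ n'" by (simp add: fps_mult_nth)
    also have "\<dots> = of_nat (n' + 1) * B $ (n' + 1)"
      using arg_cong[OF assms(3), of "\<lambda>F. F $ n'"] by simp
    finally show ?thesis using Suc by (simp del: of_nat_Suc)
  qed
qed

lemma fps_deriv_prod_eq_prod_times_sum:
  fixes F L :: "'b \<Rightarrow> 'a :: comm_ring_1 fps"
  assumes "finite S" "\<And>i. i \<in> S \<Longrightarrow> fps_deriv (F i) = F i * L i"
  shows "fps_deriv (\<Prod>i\<in>S. F i) = (\<Prod>i\<in>S. F i) * (\<Sum>i\<in>S. L i)"
  using assms by (induction S rule: finite_induct) (simp_all add: algebra_simps)

lemma fps_nth_zero_prod: "(\<Prod>i\<in>S. F i :: 'a :: comm_ring_1 fps) $ 0 = (\<Prod>i\<in>S. F i $ 0)"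
  by (induction S rule: infinite_finite_induct) auto

text \<open>The power series \<open>exp (y X\<^sup>i)\<close>.\<close>
definition fps_exp_monom :: "nat \<Rightarrow> 'a :: field_char_0 \<Rightarrow> 'a fps" where
  "fps_exp_monom i y = Abs_fps (\<lambda>n. if i dvd n then y ^ (n div i) / fact (n div i) else 0)"

lemma fps_exp_monom_nth_0 [simp]: "fps_exp_monom i y $ 0 = 1"
  by (simp add: fps_exp_monom_def)

lemma fps_exp_monom_nth_mult: "i \<ge> 1 \<Longrightarrow> fps_exp_monom i y $ (i * u) = y ^ u / fact u"
  by (simp add: fps_exp_monom_def)

lemma fps_deriv_fps_exp_monom:
  assumes "i \<ge> 1"
  shows "fps_deriv (fps_exp_monom i y) =
           fps_exp_monom i y * (fps_const (of_nat i * y) * fps_X ^ (i - 1))"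
proof (rule fps_ext)
  fix n
  let ?E = "fps_exp_monom i y"
  have rhs: "(?E * (fps_const (of_nat i * y) * fps_X ^ (i - 1))) $ n
      = (if n < i - 1 then 0 else of_nat i * y * ?E $ (n - (i - 1)))"
    by (simp add: mult.commute[of ?E] mult.assoc fps_X_power_mult_nth)
  show "fps_deriv ?E $ n = (?E * (fps_const (of_nat i * y) * fps_X ^ (i - 1))) $ n"
  proof (cases "i dvd (n + 1)")
    case True
    then obtain q where q: "n + 1 = i * q" by blast
    with assms obtain p where p: "q = Suc p" by (cases q) auto
    have "n - (i - 1) = i * p" "\<not> n < i - 1"
      using q p assms by (simp_all add: algebra_simps)
    moreover have "fps_deriv ?E $ n = of_nat (i * Suc p) * (y ^ Suc p / fact (Suc p))"
      using q p assms by (simp add: fps_exp_monom_def del: of_nat_Suc of_nat_mult)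
    moreover have "(of_nat (i * Suc p) * (y ^ Suc p / fact (Suc p)) :: 'a)
        = of_nat i * y * (y ^ p / fact p)"
      by (simp add: field_simps del: of_nat_Suc) (simp add: algebra_simps)
    ultimately show ?thesis using rhs assms by (simp add: fps_exp_monom_def)
  next
    case False
    have "\<not> i dvd (n - (i - 1))" if "\<not> n < i - 1"
    proof
      assume "i dvd (n - (i - 1))"
      then have "i dvd (n - (i - 1) + i)" by simp
      moreover have "n - (i - 1) + i = n + 1" using that assms by simp
      ultimately show False using False by simp
    qed
    then show ?thesis using rhs False by (auto simp: fps_exp_monom_def)
  qed
qed

definition weighted_partitions_bounded :: "nat \<Rightarrow> nat \<Rightarrow> (nat \<Rightarrow> nat) set" where
  "weighted_partitions_bounded K d =
     {j. (\<forall>i. i \<notin> {1..K} \<longrightarrow> j i = 0) \<and> (\<Sum>i=1..K. i * j i) = d}"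

lemma weighted_partitions_eq_bounded:
  "weighted_partitions M = weighted_partitions_bounded M M"
  by (simp add: weighted_partitions_def weighted_partitions_bounded_def)

lemma finite_weighted_partitions_bounded: "finite (weighted_partitions_bounded K d)"
proof (rule finite_subset)
  show "weighted_partitions_bounded K d \<subseteq>
      {j. \<forall>x. (x \<in> {1..K} \<longrightarrow> j x \<in> {0..d}) \<and> (x \<notin> {1..K} \<longrightarrow> j x = 0)}"
  proof (clarsimp simp: weighted_partitions_bounded_def)
    fix j :: "nat \<Rightarrow> nat" and x assume "Suc 0 \<le> x" "x \<le> K"
    then have "j x \<le> x * j x" "x * j x \<le> (\<Sum>i=Suc 0..K. i * j i)"
      by (auto intro: member_le_sum)
    then show "j x \<le> (\<Sum>i=Suc 0..K. i * j i)" by linarith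
  qed
qed (intro finite_set_of_finite_funs; auto)

lemma weighted_partitions_bounded_0:
  "weighted_partitions_bounded 0 d = (if d = 0 then {\<lambda>_. 0} else {})"
  by (auto simp: weighted_partitions_bounded_def)

lemma weighted_partitions_bounded_Suc_iff:
  "j \<in> weighted_partitions_bounded (Suc K) d \<longleftrightarrow>
     Suc K * j (Suc K) \<le> d \<and>
     j(Suc K := 0) \<in> weighted_partitions_bounded K (d - Suc K * j (Suc K))"
proof -
  have "(\<Sum>i=1..K. i * (j(Suc K := 0)) i) = (\<Sum>i=1..K. i * j i)"
    by (intro sum.cong) auto
  moreover have "(\<forall>i. i \<notin> {1..Suc K} \<longrightarrow> j i = 0) \<longleftrightarrow>
      (\<forall>i. i \<notin> {1..K} \<longrightarrow> (j(Suc K := 0)) i = 0)"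
    by (auto simp: le_Suc_eq)
  ultimately show ?thesis
    by (auto simp: weighted_partitions_bounded_def)
qed

lemma bij_betw_weighted_partitions_bounded_Suc:
  "bij_betw (\<lambda>j. (j (Suc K), j(Suc K := 0))) (weighted_partitions_bounded (Suc K) d)
     (SIGMA u:{0..d div Suc K}. weighted_partitions_bounded K (d - Suc K * u))"
proof (rule bij_betwI[where g = "\<lambda>(u, j). j(Suc K := u)"])
  have vanish: "j (Suc K) = 0" if "j \<in> weighted_partitions_bounded K e" for j e
    using that by (simp add: weighted_partitions_bounded_def)
  show "(\<lambda>j. (j (Suc K), j(Suc K := 0))) \<in> weighted_partitions_bounded (Suc K) d \<rightarrow>
      (SIGMA u:{0..d div Suc K}. weighted_partitions_bounded K (d - Suc K * u))"
    by (auto simp: weighted_partitions_bounded_Suc_iff less_eq_div_iff_mult_less_eq mult.commute)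
  show "(\<lambda>(u, j). j(Suc K := u)) \<in> (SIGMA u:{0..d div Suc K}. weighted_partitions_bounded K (d - Suc K * u))
      \<rightarrow> weighted_partitions_bounded (Suc K) d"
    by (auto simp: weighted_partitions_bounded_Suc_iff less_eq_div_iff_mult_less_eq mult.commute
        vanish fun_upd_idem)
  show "(\<lambda>(u, j). j(Suc K := u)) (j (Suc K), j(Suc K := 0)) = j" for j
    by simp
  show "(\<lambda>j. (j (Suc K), j(Suc K := 0))) ((\<lambda>(u, j). j(Suc K := u)) p) = p"
    if "p \<in> (SIGMA u:{0..d div Suc K}. weighted_partitions_bounded K (d - Suc K * u))" for p
    using that by (auto simp: vanish fun_upd_idem)
qed

lemma sum_atMost_multiples:
  fixes f :: "nat \<Rightarrow> 'a :: comm_monoid_add"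
  assumes "q \<ge> 1" "\<And>b. b \<le> d \<Longrightarrow> \<not> q dvd b \<Longrightarrow> f b = 0"
  shows "(\<Sum>b=0..d. f b) = (\<Sum>u=0..d div q. f (q * u))"
proof -
  have "(\<Sum>b=0..d. f b) = (\<Sum>b\<in>(\<lambda>u. q * u) ` {0..d div q}. f b)"
  proof (rule sum.mono_neutral_right)
    show "(\<lambda>u. q * u) ` {0..d div q} \<subseteq> {0..d}"
      using assms(1) by (auto simp: less_eq_div_iff_mult_less_eq mult.commute)
    show "\<forall>b\<in>{0..d} - (\<lambda>u. q * u) ` {0..d div q}. f b = 0"
    proof
      fix b assume b: "b \<in> {0..d} - (\<lambda>u. q * u) ` {0..d div q}"
      have "\<not> q dvd b"
      proof
        assume "q dvd b"
        then obtain u where u: "b = q * u" ..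
        then have "u \<le> d div q"
          using b assms(1) by (simp add: less_eq_div_iff_mult_less_eq mult.commute)
        with b u show False by auto
      qed
      with b assms(2) show "f b = 0" by auto
    qed
  qed simp
  also have "\<dots> = (\<Sum>u=0..d div q. f (q * u))"
    using assms(1) by (subst sum.reindex) (auto simp: inj_on_def)
  finally show ?thesis .
qed

lemma fps_exp_monom_prod_nth:
  "(\<Prod>i=1..K. fps_exp_monom i (Y i)) $ d =
     (\<Sum>j\<in>weighted_partitions_bounded K d. \<Prod>i=1..K. Y i ^ j i / fact (j i))"
proof (induction K arbitrary: d)
  case 0
  then show ?case by (simp add: weighted_partitions_bounded_0)
next
  case (Suc K)
  define q where "q = Suc K"
  have q: "q \<ge> 1" by (simp add: q_def)
  define P where "P = (\<Prod>i=1..K. fps_exp_monom i (Y i))"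
  define c where "c = (\<lambda>j. \<Prod>i=1..K. Y i ^ j i / fact (j i))"
  have P: "P $ e = (\<Sum>j\<in>weighted_partitions_bounded K e. c j)" for e
    unfolding P_def c_def by (rule Suc.IH)
  have "(\<Prod>i=1..Suc K. fps_exp_monom i (Y i)) $ d = (\<Sum>b=0..d. fps_exp_monom q (Y q) $ b * P $ (d - b))"
    by (simp add: P_def q_def mult.commute fps_mult_nth)
  also have "\<dots> = (\<Sum>u=0..d div q. fps_exp_monom q (Y q) $ (q * u) * P $ (d - q * u))"
    by (rule sum_atMost_multiples) (simp_all add: q_def fps_exp_monom_def)
  also have "\<dots> = (\<Sum>u=0..d div q. Y q ^ u / fact u * (\<Sum>j\<in>weighted_partitions_bounded K (d - q * u). c j))"
    by (simp add: P fps_exp_monom_nth_mult[OF q])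
  also have "\<dots> = (\<Sum>u=0..d div q. \<Sum>j\<in>weighted_partitions_bounded K (d - q * u). c j * (Y q ^ u / fact u))"
    by (simp add: sum_distrib_left mult_ac)
  also have "\<dots> = (\<Sum>(u, j)\<in>(SIGMA u:{0..d div q}. weighted_partitions_bounded K (d - q * u)).
                     c j * (Y q ^ u / fact u))"
    by (subst sum.Sigma) (auto simp: finite_weighted_partitions_bounded)
  also have "\<dots> = (\<Sum>j\<in>weighted_partitions_bounded (Suc K) d. c (j(q := 0)) * (Y q ^ j q / fact (j q)))"
    unfolding q_def
    by (subst sum.reindex_bij_betw[OF bij_betw_weighted_partitions_bounded_Suc, symmetric]) simp
  also have "\<dots> = (\<Sum>j\<in>weighted_partitions_bounded (Suc K) d. \<Prod>i=1..Suc K. Y i ^ j i / fact (j i))"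
    by (intro sum.cong refl) (simp add: c_def q_def)
  finally show ?case .
qed

text \<open>
  \<open>W\<close> agrees up to degree \<open>M\<close> with \<open>\<Prod>\<^sub>i\<^sub>\<le>\<^sub>M exp (Y\<^sub>i X\<^sup>i)\<close>: both have constant term \<open>1\<close> and
  logarithmic derivatives that agree below degree \<open>M\<close>.
\<close>
lemma fps_nth_eq_weighted_partitions_sum:
  fixes W :: "'a :: field_char_0 fps" and Y :: "nat \<Rightarrow> 'a"
  assumes "W $ 0 = 1" "fps_deriv W = W * Abs_fps (\<lambda>n. of_nat (n + 1) * Y (n + 1))"
  shows "W $ M = (\<Sum>j\<in>weighted_partitions M. \<Prod>i=1..M. Y i ^ j i / fact (j i))"
proof -
  define T where "T = (\<Prod>i=1..M. fps_exp_monom i (Y i))"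
  define Q where "Q = (\<Sum>i=1..M. fps_const (of_nat i * Y i) * fps_X ^ (i - 1))"
  have "fps_deriv T = T * Q"
    unfolding T_def Q_def
    by (rule fps_deriv_prod_eq_prod_times_sum) (simp_all add: fps_deriv_fps_exp_monom)
  moreover have "Abs_fps (\<lambda>n. of_nat (n + 1) * Y (n + 1)) $ n = Q $ n" if "n < M" for n
  proof -
    have "Q $ n = (\<Sum>i=1..M. if i = n + 1 then of_nat i * Y i else 0)"
      unfolding Q_def fps_sum_nth by (intro sum.cong refl) (auto simp: fps_X_power_nth)
    then show ?thesis using that by (simp add: sum.delta)
  qed
  moreover have "T $ 0 = 1" by (simp add: T_def fps_nth_zero_prod)
  ultimately have "W $ M = T $ M"
    using fps_nth_eq_if_same_log_deriv[OF _ assms(2), of T Q M M] assms(1) by simp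
  then show ?thesis
    unfolding T_def fps_exp_monom_prod_nth weighted_partitions_eq_bounded .
qed

section \<open>Formal Laurent series\<close>

lemma fls_deriv_powi:
  fixes F :: "'a :: field_char_0 fls"
  assumes "F \<noteq> 0"
  shows "fls_deriv (F powi n) = of_int n * F powi (n - 1) * fls_deriv F"
proof (cases "n \<ge> 0")
  case True
  then obtain k where k: "n = int k" by (metis nonneg_int_cases)
  show ?thesis
  proof (cases k)
    case (Suc k')
    have "F powi (n - 1) = F ^ k'" using k Suc by (simp add: power_int_def)
    moreover have "F powi n = F ^ k" using k by simp
    ultimately show ?thesis using k Suc by (simp only:) (subst fls_deriv_power, simp)
  qed (use k in simp)
next
  case False
  then obtain k where k: "n = - int k" "k > 0"
    by (metis neg_int_cases not_le of_nat_0_less_iff zero_less_Suc less_le)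
  obtain j where j: "k = Suc j" using k(2) by (cases k) auto
  have "F ^ (k - 1) * inverse (F ^ k) ^ 2 = inverse (F ^ (k + 1))"
    using assms by (simp add: j power2_eq_square inverse_eq_divide field_simps)
  then show ?thesis
    using k by (simp add: power_int_def fls_inverse_deriv fls_deriv_power power_inverse
                  nat_add_distrib algebra_simps)
qed

lemma fls_compose_fps_sum:
  assumes "H \<noteq> 0" "H $ 0 = 0"
  shows "fls_compose_fps (\<Sum>i\<in>S. f i) H = (\<Sum>i\<in>S. fls_compose_fps (f i) H)"
  by (induction S rule: infinite_finite_induct) (auto simp: fls_compose_fps_add assms)

lemma fls_compose_fps_prod:
  assumes "H \<noteq> 0" "H $ 0 = 0"
  shows "fls_compose_fps (\<Prod>i\<in>S. f i) H = (\<Prod>i\<in>S. fls_compose_fps (f i) H)"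
  by (induction S rule: infinite_finite_induct) (auto simp: fls_compose_fps_mult assms)

lemma fls_const_prod: "(\<Prod>i\<in>S. fls_const (c i)) = fls_const (\<Prod>i\<in>S. c i :: 'a :: comm_ring_1)"
  by (induction S rule: infinite_finite_induct) (auto simp: fls_const_mult_const)

lemma fls_eq_principal_part_plus_regpart:
  fixes H :: "'a :: field fls"
  shows "H = (\<Sum>i=fls_subdegree H..-1. fls_const (H $$ i) * fls_X_intpow i) + fps_to_fls (fls_regpart H)"
proof (rule fls_eqI)
  fix n
  have "(\<Sum>i=fls_subdegree H..-1. fls_const (H $$ i) * fls_X_intpow i) $$ n
      = (\<Sum>i=fls_subdegree H..-1. if n = i then H $$ i else 0)"
    unfolding fls_nth_sum by (intro sum.cong) auto
  also have "\<dots> = (if n \<in> {fls_subdegree H..-1} then H $$ n else 0)"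
    by (simp add: sum.delta)
  finally show "H $$ n = ((\<Sum>i=fls_subdegree H..-1. fls_const (H $$ i) * fls_X_intpow i)
      + fps_to_fls (fls_regpart H)) $$ n"
    by (cases "n < fls_subdegree H") auto
qed

text \<open>
  For \<open>i \<noteq> -1\<close> the series \<open>G\<^sup>i G'\<close> is the derivative of \<open>G\<^sup>i\<^sup>+\<^sup>1 / (i + 1)\<close>, so it has
  no residue.
\<close>
lemma fls_residue_powi_times_deriv:
  fixes G :: "'a :: field_char_0 fls"
  assumes "fls_subdegree G = 1"
  shows "fls_residue (G powi i * fls_deriv G) = (if i = -1 then 1 else 0)"
proof (cases "i = -1")
  case True
  have "G \<noteq> 0" using assms by auto
  then show ?thesis
    using fls_residue_deriv_times_inverse_eq_subdegree(2)[of G] True assms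
    by (simp add: power_int_minus)
next
  case False
  have G: "G \<noteq> 0" using assms by auto
  have ne: "(of_int (i + 1) :: 'a) \<noteq> 0" unfolding of_int_eq_0_iff using False by linarith
  have "fls_deriv (G powi (i + 1)) = fls_const (of_int (i + 1)) * (G powi i * fls_deriv G)"
    using fls_deriv_powi[OF G, of "i + 1"] by (simp add: fls_of_int mult.assoc)
  then have "G powi i * fls_deriv G = fls_const (inverse (of_int (i + 1))) * fls_deriv (G powi (i + 1))"
    using ne by (simp add: mult.assoc[symmetric] fls_const_mult_const)
  then show ?thesis
    using False by (simp only: fls_residue_def fls_mult_const_nth) (simp add: fls_residue_deriv[simplified])
qed

text \<open>
  Split \<open>H\<close> into its principal part and a power series; the latter stays a power series, and a
  monomial \<open>c X\<^sup>i\<close> contributes the residue of \<open>c G\<^sup>i G'\<close>.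
\<close>
lemma fls_residue_compose_fps:
  fixes H :: "'a :: field_char_0 fls" and G :: "'a fps"
  assumes G0: "G $ 0 = 0" and G1: "G $ 1 \<noteq> 0"
  shows "fls_residue (fls_compose_fps H G * fps_to_fls (fps_deriv G)) = fls_residue H"
proof -
  define Gf where "Gf = fps_to_fls G"
  define d where "d = fls_subdegree H"
  have Gnz: "G \<noteq> 0" using G1 by auto
  have "subdegree G = 1" by (rule subdegreeI) (use G0 G1 in \<open>auto simp: less_Suc_eq_0_disj\<close>)
  then have sdG: "fls_subdegree Gf = 1" by (simp add: Gf_def fls_subdegree_fls_to_fps)
  have dG: "fps_to_fls (fps_deriv G) = fls_deriv Gf" by (simp add: Gf_def fls_deriv_fps_to_fls)
  have monomial: "fls_residue (fls_compose_fps (fls_const c * fls_X_intpow i) G * fls_deriv Gf)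
        = (if i = -1 then c else 0)" for c i
  proof -
    have "fls_compose_fps (fls_const c * fls_X_intpow i) G * fls_deriv Gf
        = fls_const c * (Gf powi i * fls_deriv Gf)"
      using Gnz G0 by (simp add: fls_compose_fps_mult fls_compose_fps_powi Gf_def mult.assoc
                          flip: fls_X_power_int)
    then show ?thesis
      using fls_residue_powi_times_deriv[OF sdG, of i]
      by (simp only: fls_residue_def fls_mult_const_nth) simp
  qed
  have "fls_compose_fps H G * fls_deriv Gf =
      (\<Sum>i=d..-1. fls_compose_fps (fls_const (H $$ i) * fls_X_intpow i) G * fls_deriv Gf)
      + fps_to_fls ((fls_regpart H oo G) * fps_deriv G)"
  proof -
    have "fls_compose_fps H G = fls_compose_fps
        ((\<Sum>i=d..-1. fls_const (H $$ i) * fls_X_intpow i) + fps_to_fls (fls_regpart H)) G"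
      unfolding d_def by (rule arg_cong[OF fls_eq_principal_part_plus_regpart])
    also have "\<dots> = (\<Sum>i=d..-1. fls_compose_fps (fls_const (H $$ i) * fls_X_intpow i) G)
        + fps_to_fls (fls_regpart H oo G)"
      using Gnz G0 by (simp add: fls_compose_fps_add fls_compose_fps_sum)
    finally show ?thesis
      by (simp add: sum_distrib_right distrib_right dG fls_times_fps_to_fls Gf_def
               flip: fls_deriv_fps_to_fls)
  qed
  then have "fls_residue (fls_compose_fps H G * fls_deriv Gf) =
      (\<Sum>i=d..-1. fls_residue (fls_compose_fps (fls_const (H $$ i) * fls_X_intpow i) G * fls_deriv Gf))"
    by (simp add: fls_nth_sum)
  also have "\<dots> = (\<Sum>i=d..-1. if i = -1 then H $$ i else 0)"
    by (simp only: monomial)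
  also have "\<dots> = fls_residue H"
    by (cases "d \<le> -1") (auto simp: sum.delta d_def)
  finally show ?thesis by (simp add: dG)
qed

abbreviation fls_lead_coeff :: "'a :: zero fls \<Rightarrow> 'a" where
  "fls_lead_coeff F \<equiv> F $$ fls_subdegree F"

lemma fls_lead_coeff_mult:
  "F \<noteq> 0 \<Longrightarrow> G \<noteq> 0 \<Longrightarrow> fls_lead_coeff (F * G) = fls_lead_coeff F * fls_lead_coeff (G :: 'a :: idom fls)"
  by simp

lemma fls_lead_coeff_inverse:
  "F \<noteq> 0 \<Longrightarrow> fls_lead_coeff (inverse F) = inverse (fls_lead_coeff (F :: 'a :: field fls))"
  by (simp add: fls_inverse_base)

lemma fls_lead_coeff_power:
  "F \<noteq> 0 \<Longrightarrow> fls_lead_coeff (F ^ n) = fls_lead_coeff (F :: 'a :: idom fls) ^ n"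
  by (induction n) (auto simp: fls_lead_coeff_mult)

lemma fls_lead_coeff_powi:
  fixes F :: "'a :: field fls"
  assumes "F \<noteq> 0"
  shows "fls_lead_coeff (F powi n) = fls_lead_coeff F powi n"
proof (cases "n \<ge> 0")
  case True
  then show ?thesis using fls_lead_coeff_power[OF assms] by (simp add: power_int_def)
next
  case False
  then have "F powi n = inverse (F ^ nat (-n))" "fls_lead_coeff F powi n = inverse (fls_lead_coeff F ^ nat (-n))"
    by (simp_all add: power_int_def power_inverse)
  moreover have "fls_lead_coeff (inverse (F ^ nat (-n))) = inverse (fls_lead_coeff (F ^ nat (-n)))"
    by (rule fls_lead_coeff_inverse) (use assms in simp)
  ultimately show ?thesis using fls_lead_coeff_power[OF assms] by simp
qed

lemma fls_lead_coeff_prod: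
  fixes F :: "'b \<Rightarrow> 'a :: idom fls"
  assumes "finite S" "\<And>i. i \<in> S \<Longrightarrow> F i \<noteq> 0"
  shows "fls_lead_coeff (\<Prod>i\<in>S. F i) = (\<Prod>i\<in>S. fls_lead_coeff (F i))"
  using assms
proof (induction S rule: finite_induct)
  case (insert x S)
  then have "(\<Prod>i\<in>S. F i) \<noteq> 0" by (auto simp: prod_zero_iff)
  then show ?case
    using insert by (simp add: fls_lead_coeff_mult del: fls_subdegree_mult fls_times_base)
qed simp

definition fls_log_deriv :: "'a :: field_char_0 fls \<Rightarrow> 'a fls" where
  "fls_log_deriv F = fls_X * fls_deriv F / F"

lemma fls_log_deriv_mult:
  "F \<noteq> 0 \<Longrightarrow> G \<noteq> 0 \<Longrightarrow> fls_log_deriv (F * G) = fls_log_deriv F + fls_log_deriv G"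
  by (simp add: fls_log_deriv_def field_simps)

lemma fls_log_deriv_const: "fls_log_deriv (fls_const c) = 0"
  by (simp add: fls_log_deriv_def)

lemma fls_log_deriv_X_intpow: "fls_log_deriv (fls_X_intpow a :: 'a :: field_char_0 fls) = of_int a"
proof -
  have "fls_X * fls_X_intpow (a - 1) = (fls_X_intpow a :: 'a fls)"
    using fls_X_intpow_times_fls_X_intpow[of 1 "a - 1"] by (simp add: fls_X_conv_shift_1)
  then show ?thesis
    by (simp add: fls_log_deriv_def fls_deriv_X_intpow mult.left_commute[of fls_X]
             del: fls_X_intpow_times_fls_X_intpow)
qed

lemma fls_log_deriv_powi: "F \<noteq> 0 \<Longrightarrow> fls_log_deriv (F powi n) = of_int n * fls_log_deriv F"
  by (simp add: fls_log_deriv_def fls_deriv_powi field_simps power_int_diff)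

lemma fls_log_deriv_prod:
  "finite S \<Longrightarrow> (\<And>i. i \<in> S \<Longrightarrow> F i \<noteq> 0) \<Longrightarrow>
     fls_log_deriv (\<Prod>i\<in>S. F i) = (\<Sum>i\<in>S. fls_log_deriv (F i))"
proof (induction S rule: finite_induct)
  case empty
  then show ?case by (simp add: fls_log_deriv_def)
next
  case (insert x S)
  then show ?case by (simp add: fls_log_deriv_mult prod_zero_iff)
qed

definition fls_normalize :: "'a :: field fls \<Rightarrow> 'a fls" where
  "fls_normalize F = fls_const (inverse (fls_lead_coeff F)) * fls_base_factor F"

lemma fls_normalize_nth:
  "fls_normalize F $$ n = F $$ (n + fls_subdegree F) / fls_lead_coeff F"
  by (simp add: fls_normalize_def fls_base_factor_nth field_simps)

lemma fls_subdegree_normalize: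
  assumes "F \<noteq> 0"
  shows "fls_subdegree (fls_normalize F) = 0"
proof -
  have "fls_const (inverse (fls_lead_coeff F)) \<noteq> 0"
    using assms by (simp add: nth_fls_subdegree_nonzero)
  moreover have "fls_base_factor F \<noteq> 0"
    using assms by (rule fls_base_factor_nonzero)
  then show ?thesis by (simp add: fls_normalize_def fls_shift_eq0_iff)
qed

lemma fls_normalize_nth_0: "F \<noteq> 0 \<Longrightarrow> fls_normalize F $$ 0 = 1"
  by (simp add: fls_normalize_nth)

lemma fls_log_deriv_normalize:
  fixes F :: "'a :: field_char_0 fls"
  assumes "F \<noteq> 0"
  shows "fls_log_deriv (fls_normalize F) = fls_log_deriv F - of_int (fls_subdegree F)"
proof -
  define c where "c = fls_const (inverse (fls_lead_coeff F))"
  have c: "c \<noteq> 0" using assms by (simp add: c_def nth_fls_subdegree_nonzero)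
  have X: "fls_X_intpow (- fls_subdegree F) \<noteq> (0 :: 'a fls)" by (rule fls_X_intpow_nonzero)
  have "fls_normalize F = c * fls_X_intpow (- fls_subdegree F) * F"
    by (simp add: c_def fls_normalize_def fls_shifted_times_simps mult.assoc)
  then have "fls_log_deriv (fls_normalize F) =
      fls_log_deriv c + fls_log_deriv (fls_X_intpow (- fls_subdegree F)) + fls_log_deriv F"
    by (simp only: fls_log_deriv_mult c X assms mult_eq_0_iff simp_thms)
  then show ?thesis
    by (simp only: c_def fls_log_deriv_const fls_log_deriv_X_intpow) simp
qed

lemma fps_deriv_regpart_eq_if_fls_log_deriv_eq:
  fixes F :: "'a :: field_char_0 fls"
  assumes "F \<noteq> 0" "fls_subdegree F = 0" "fls_log_deriv F = fls_X * fps_to_fls Y"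
  shows "fps_deriv (fls_regpart F) = fls_regpart F * Y"
proof -
  have F: "F = fps_to_fls (fls_regpart F)" using assms(2) by simp
  have "fls_deriv F = F * fps_to_fls Y"
    using assms(1,3) by (simp add: fls_log_deriv_def field_simps)
  then have "fps_to_fls (fps_deriv (fls_regpart F)) = fps_to_fls (fls_regpart F * Y)"
    by (subst (asm) (1 2) F) (simp add: fls_deriv_fps_to_fls fls_times_fps_to_fls)
  then show ?thesis by simp
qed

section \<open>Apostol--Bernoulli series\<close>

definition fls_exp :: "complex \<Rightarrow> complex fls" where
  "fls_exp c = fps_to_fls (fps_exp c)"

lemma fls_exp_nonzero: "fls_exp c \<noteq> 0"
  by (simp add: fls_exp_def fps_exp_def fps_eq_iff)

lemma fls_exp_power: "fls_exp c ^ n = fls_exp (of_nat n * c)"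
  by (simp add: fls_exp_def fps_exp_power_mult flip: fps_to_fls_power)

lemma fls_log_deriv_fls_exp_1: "fls_log_deriv (fls_exp 1) = fls_X"
  using fls_exp_nonzero[of 1] by (simp add: fls_log_deriv_def fls_exp_def fls_deriv_fps_to_fls)

text \<open>
  \<open>apostol_series \<rho> i\<close> is the expansion of \<open>i z / (\<rho> e\<^sup>i\<^sup>z - 1) = \<Sum>\<^sub>n \<beta>\<^sub>n(\<rho>) (i z)\<^sup>n / n!\<close>.
\<close>
definition apostol_denom :: "complex \<Rightarrow> nat \<Rightarrow> complex fls" where
  "apostol_denom \<rho> i = fls_const \<rho> * fls_exp (of_nat i) - 1"

definition apostol_series :: "complex \<Rightarrow> nat \<Rightarrow> complex fls" where
  "apostol_series \<rho> i = fls_const (of_nat i) * fls_X / apostol_denom \<rho> i"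

lemma apostol_denom_nth:
  "apostol_denom \<rho> i $$ n =
     (if n < 0 then 0 else \<rho> * of_nat i ^ nat n / fact (nat n)) - (if n = 0 then 1 else 0)"
  by (simp add: apostol_denom_def fls_exp_def fps_exp_def)

lemma apostol_denom_nonzero: "i \<ge> 1 \<Longrightarrow> apostol_denom \<rho> i \<noteq> 0"
proof
  assume "i \<ge> 1" "apostol_denom \<rho> i = 0"
  then have "apostol_denom \<rho> i $$ 0 = 0" "apostol_denom \<rho> i $$ 1 = 0" by auto
  then show False using \<open>i \<ge> 1\<close> by (simp add: apostol_denom_nth)
qed

lemma apostol_denom_subdegree:
  assumes "i \<ge> 1"
  shows "fls_subdegree (apostol_denom \<rho> i) = (if \<rho> = 1 then 1 else 0)"
  using assms by (cases "\<rho> = 1") (auto intro!: fls_subdegree_eqI simp: apostol_denom_nth)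

lemma apostol_denom_lead_coeff:
  "i \<ge> 1 \<Longrightarrow> fls_lead_coeff (apostol_denom \<rho> i) = (if \<rho> = 1 then of_nat i else \<rho> - 1)"
  by (simp add: apostol_denom_subdegree apostol_denom_nth)

lemma apostol_series_nonzero: "i \<ge> 1 \<Longrightarrow> apostol_series \<rho> i \<noteq> 0"
  using apostol_denom_nonzero by (auto simp: apostol_series_def)

lemma apostol_denom_eq: "i \<ge> 1 \<Longrightarrow>
    apostol_denom \<rho> i = fls_const (of_nat i) * fls_X * inverse (apostol_series \<rho> i)"
  using apostol_denom_nonzero[of i \<rho>] by (simp add: apostol_series_def field_simps)

lemma apostol_series_subdegree_lead_coeff:
  assumes "i \<ge> 1"
  shows "fls_subdegree (apostol_series \<rho> i) = (if \<rho> = 1 then 0 else 1)"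
    and "fls_lead_coeff (apostol_series \<rho> i) = (if \<rho> = 1 then 1 else of_nat i / (\<rho> - 1))"
proof -
  define A :: "complex fls" where "A = fls_const (of_nat i) * fls_X"
  define Q where "Q = apostol_denom \<rho> i"
  have A: "A \<noteq> 0" "fls_subdegree A = 1" "fls_lead_coeff A = of_nat i" using assms by (simp_all add: A_def)
  have Q: "Q \<noteq> 0" "inverse Q \<noteq> 0" using apostol_denom_nonzero[OF assms] by (simp_all add: Q_def)
  have AQ: "apostol_series \<rho> i = A * inverse Q"
    by (simp add: apostol_series_def A_def Q_def field_simps)
  show "fls_subdegree (apostol_series \<rho> i) = (if \<rho> = 1 then 0 else 1)"
    using A Q apostol_denom_subdegree[OF assms, of \<rho>] by (simp add: AQ Q_def)
  have "fls_lead_coeff (apostol_series \<rho> i) = of_nat i * inverse (fls_lead_coeff Q)"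
    unfolding AQ fls_lead_coeff_mult[OF A(1) Q(2)] fls_lead_coeff_inverse[OF Q(1)] A(3) ..
  then show "fls_lead_coeff (apostol_series \<rho> i) = (if \<rho> = 1 then 1 else of_nat i / (\<rho> - 1))"
    using apostol_denom_lead_coeff[OF assms, of \<rho>] assms
    by (simp add: Q_def field_simps split: if_splits)
qed

lemma apostol_series_nth_neg: "i \<ge> 1 \<Longrightarrow> n < 0 \<Longrightarrow> apostol_series \<rho> i $$ n = 0"
  using apostol_series_subdegree_lead_coeff(1)[of i \<rho>]
  by (intro fls_eq0_below_subdegree) (auto split: if_splits)

lemma apostol_series_nth_0: "i \<ge> 1 \<Longrightarrow> apostol_series \<rho> i $$ 0 = (if \<rho> = 1 then 1 else 0)"
  using apostol_series_subdegree_lead_coeff[of i \<rho>] by (cases "\<rho> = 1") auto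

lemma fls_log_deriv_apostol_series:
  assumes "i \<ge> 1"
  shows "fls_log_deriv (apostol_series \<rho> i) = 1 - apostol_series \<rho> i - fls_const (of_nat i) * fls_X"
proof -
  define Q where "Q = apostol_denom \<rho> i"
  define c :: "complex fls" where "c = fls_const (of_nat i)"
  have Q: "Q \<noteq> 0" using apostol_denom_nonzero[OF assms] by (simp add: Q_def)
  have dQ: "fls_deriv Q = c * (Q + 1)"
    by (simp add: Q_def c_def apostol_denom_def fls_exp_def fls_deriv_fps_to_fls mult_ac
          fls_const_mult_const[symmetric] flip: fps_const_to_fls fls_times_fps_to_fls)
  have D: "apostol_series \<rho> i = c * fls_X * inverse Q"
    by (simp add: apostol_series_def Q_def c_def field_simps)
  have "fls_deriv (apostol_series \<rho> i) = c * inverse Q - c * fls_X * fls_deriv Q * inverse Q ^ 2"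
    unfolding D by (simp add: fls_inverse_deriv c_def algebra_simps)
  then show ?thesis
    using Q apostol_series_nonzero[OF assms, of \<rho>]
    unfolding fls_log_deriv_def D dQ c_def[symmetric] by (simp add: field_simps power2_eq_square)
qed

lemma apostol_bernoulli_eq_apostol_series_nth:
  "apostol_bernoulli n \<rho> = fact n * apostol_series \<rho> 1 $$ int n"
proof -
  have "(\<lambda>z. exp z) has_laurent_expansion fps_to_fls (fps_exp 1)"
    by (intro has_laurent_expansion_fps fps_expansion_intros)
  then have "laurent_expansion (\<lambda>z. z / (\<rho> * exp z - 1)) 0
      = fls_X / (fls_const \<rho> * fps_to_fls (fps_exp 1) - 1)"
    by (intro laurent_expansion_0_eqI laurent_expansion_intros)
  then show ?thesis
    by (simp add: apostol_bernoulli_def apostol_series_def apostol_denom_def fls_exp_def)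
qed

lemma apostol_series_scale:
  assumes "i \<ge> 1"
  shows "apostol_series \<rho> i = fls_compose_fps (apostol_series \<rho> 1) (fps_const (of_nat i) * fps_X)"
proof -
  define H :: "complex fps" where "H = fps_const (of_nat i) * fps_X"
  have H: "H \<noteq> 0" "H $ 0 = 0" using assms by (auto simp: H_def)
  have "fls_compose_fps (apostol_series \<rho> 1) H
      = fls_compose_fps fls_X H / fls_compose_fps (apostol_denom \<rho> 1) H"
    using H by (simp add: apostol_series_def fls_compose_fps_divide)
  also have "fls_compose_fps fls_X H = fls_const (of_nat i) * fls_X"
    by (simp add: H_def fls_times_fps_to_fls flip: fps_const_to_fls)
  also have "fls_compose_fps (apostol_denom \<rho> 1) H = apostol_denom \<rho> i"
    using H by (simp add: apostol_denom_def fls_exp_def fls_compose_fps_diff fls_compose_fps_mult H_def)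
  finally show ?thesis by (simp add: apostol_series_def H_def)
qed

lemma apostol_series_nth:
  assumes "i \<ge> 1"
  shows "apostol_series \<rho> i $$ int n = of_nat i ^ n * apostol_bernoulli n \<rho> / fact n"
proof -
  have "apostol_series \<rho> i $$ int n = apostol_series \<rho> 1 $$ int n * of_nat i powi int n"
    using assms
    by (subst apostol_series_scale[OF assms]) (simp add: fls_nth_fls_compose_fps_linear)
  then show ?thesis by (simp add: apostol_bernoulli_eq_apostol_series_nth)
qed

lemma inverse_one_minus_exp_power:
  assumes "i \<ge> 1"
  shows "1 / (1 - (fls_const \<rho> * fls_exp 1) ^ i) =
           fls_const (- 1 / of_nat i) * fls_X_intpow (-1) * apostol_series (\<rho> ^ i) i"
proof -
  have "1 - (fls_const \<rho> * fls_exp 1) ^ i = - apostol_denom (\<rho> ^ i) i"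
    by (simp add: apostol_denom_def power_mult_distrib fls_exp_power fls_const_power)
  also have "\<dots> = - (fls_const (of_nat i) * fls_X * inverse (apostol_series (\<rho> ^ i) i))"
    using apostol_denom_eq[OF assms] by simp
  finally have e: "1 - (fls_const \<rho> * fls_exp 1) ^ i =
      - (fls_const (of_nat i) * fls_X * inverse (apostol_series (\<rho> ^ i) i))" .
  have "inverse (fls_const (of_nat i) * fls_X * inverse (apostol_series (\<rho> ^ i) i)) =
        fls_const (inverse (of_nat i)) * fls_X_inv * apostol_series (\<rho> ^ i) i"
    using assms apostol_series_nonzero[OF assms, of "\<rho> ^ i"]
    by (simp add: fls_inverse_const fls_inverse_X field_simps)
       (simp add: fls_X_inv_conv_shift_1 fls_X_conv_shift_1 fls_shifted_times_simps)
  then show ?thesis unfolding e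
    by (simp add: divide_inverse fls_X_inv_conv_shift_1 flip: fls_const_mult_const)
qed

section \<open>Primitive roots of unity\<close>

locale primitive_root_unity =
  fixes k :: nat and \<xi> :: complex
  assumes order_pos: "k \<ge> 1" and power_order: "\<xi> ^ k = 1"
    and power_ne_1: "\<forall>j. 0 < j \<and> j < k \<longrightarrow> \<xi> ^ j \<noteq> 1"
begin

lemma power_mod: "\<xi> ^ i = \<xi> ^ (i mod k)"
proof -
  have "\<xi> ^ i = \<xi> ^ (k * (i div k) + i mod k)" by simp
  also have "\<dots> = (\<xi> ^ k) ^ (i div k) * \<xi> ^ (i mod k)" by (simp only: power_add power_mult)
  finally have "\<xi> ^ i = (\<xi> ^ k) ^ (i div k) * \<xi> ^ (i mod k)" .
  then show ?thesis using power_order by simp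
qed

lemma power_eq_1_iff: "\<xi> ^ i = 1 \<longleftrightarrow> k dvd i"
proof -
  have "i mod k < k" using order_pos by simp
  then show ?thesis
    unfolding power_mod[of i] using power_ne_1 by (cases "i mod k = 0") (auto simp: dvd_eq_mod_eq_0)
qed

lemma nonzero: "\<xi> \<noteq> 0"
  using power_order order_pos by (auto simp: power_0_left)

lemma inj_on_power: "inj_on (\<lambda>w. \<xi> ^ w) {..<k}"
proof (rule linorder_inj_onI')
  fix a b assume "a \<in> {..<k}" "b \<in> {..<k}" "a < b"
  then have "\<xi> ^ (b - a) \<noteq> 1" using power_ne_1 by auto
  moreover have "\<xi> ^ b = \<xi> ^ a * \<xi> ^ (b - a)" using \<open>a < b\<close> by (simp flip: power_add)
  ultimately show "\<xi> ^ a \<noteq> \<xi> ^ b" using nonzero by auto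
qed

text \<open>
  Both sides of \<open>\<Prod>\<^sub>w\<^sub>=\<^sub>1\<^sup>k\<^sup>-\<^sup>1 (X - \<xi>\<^sup>w) = 1 + X + \<dots> + X\<^sup>k\<^sup>-\<^sup>1\<close> are monic of degree \<open>k - 1\<close>
  and vanish at the \<open>k - 1\<close> distinct points \<open>\<xi>\<^sup>w\<close>; evaluate at \<open>X = 1\<close>.
\<close>
lemma prod_one_minus_powers: "(\<Prod>w=1..k-1. 1 - \<xi> ^ w) = of_nat k"
proof -
  define Q where "Q = (\<Prod>w=1..k-1. [:- (\<xi> ^ w), 1:])"
  define S where "S = (\<Sum>j<k. monom (1::complex) j)"
  have "Q = S"
  proof (rule poly_eqI_degree_lead_coeff[of _ "k - 1" _ "(\<lambda>w. \<xi> ^ w) ` {1..k-1}"])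
    have "degree Q = k - 1" unfolding Q_def by (subst degree_prod_eq_sum_degree) auto
    then show "coeff Q (k - 1) = coeff S (k - 1)" "degree Q \<le> k - 1"
      using lead_coeff_prod[of "\<lambda>w. [:- (\<xi> ^ w), 1:]" "{1..k-1}"] order_pos
      by (simp_all add: Q_def S_def coeff_sum coeff_monom)
    show "degree S \<le> k - 1"
      unfolding S_def by (intro degree_sum_le) (auto simp: degree_monom_eq)
    have "inj_on (\<lambda>w. \<xi> ^ w) {1..k-1}"
      by (rule inj_on_subset[OF inj_on_power]) auto
    then show "k - 1 \<le> card ((\<lambda>w. \<xi> ^ w) ` {1..k-1})" by (simp add: card_image)
    fix z assume "z \<in> (\<lambda>w. \<xi> ^ w) ` {1..k-1}"
    then obtain w where w: "w \<in> {1..k-1}" "z = \<xi> ^ w" by blast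
    have "z ^ k = (\<xi> ^ k) ^ w" by (simp add: w(2) power_mult[symmetric] mult.commute)
    then have "z ^ k = 1" by (simp add: power_order)
    moreover have "z \<noteq> 1" using w power_ne_1 by auto
    ultimately have "poly S z = 0" by (simp add: S_def poly_sum poly_monom sum_gp_strict)
    moreover have "poly Q z = 0" unfolding Q_def poly_prod using w by (intro prod_zero) auto
    ultimately show "poly Q z = poly S z" by simp
  qed
  then have "poly Q 1 = poly S 1" by simp
  then show ?thesis by (simp add: Q_def S_def poly_prod poly_sum poly_monom)
qed

lemma count_powers_ne_1: "(\<Sum>i=1..N. (if \<xi> ^ i = 1 then 0 else 1 :: int)) = int N - int (N div k)"
proof (induction N)
  case (Suc N)
  have "(\<Sum>i=1..Suc N. (if \<xi> ^ i = 1 then 0 else 1 :: int)) =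
        (\<Sum>i=1..N. (if \<xi> ^ i = 1 then 0 else 1 :: int)) + (if k dvd Suc N then 0 else 1)"
    by (simp add: power_eq_1_iff)
  also have "\<dots> = int (Suc N) - int (Suc N div k)"
    using Suc by (auto simp: div_Suc dvd_eq_mod_eq_0)
  finally show ?case .
qed simp

text \<open>\<open>lead_const N\<close> is the leading coefficient of \<open>\<Prod>\<^sub>i\<^sub>=\<^sub>1\<^sup>N apostol_series (\<xi>\<^sup>i) i\<close>.\<close>
definition lead_const :: "nat \<Rightarrow> complex" where
  "lead_const N = (\<Prod>i=1..N. if \<xi> ^ i = 1 then 1 else of_nat i / (\<xi> ^ i - 1))"

definition tail_prod :: "nat \<Rightarrow> complex" where
  "tail_prod N = (\<Prod>w=N mod k + 1..k-1. 1 - \<xi> ^ w)"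

lemma tail_prod_Suc_dvd:
  assumes "k dvd Suc N"
  shows "tail_prod N = 1" "tail_prod (Suc N) = of_nat k"
proof -
  have "N mod k < k" "Suc N mod k = 0" using assms order_pos by simp_all
  then have "Suc (N mod k) = k" by (simp add: mod_Suc split: if_splits)
  then show "tail_prod N = 1" by (simp add: tail_prod_def)
  show "tail_prod (Suc N) = of_nat k"
    using assms prod_one_minus_powers by (simp add: tail_prod_def dvd_eq_mod_eq_0)
qed

lemma tail_prod_Suc_not_dvd:
  assumes "\<not> k dvd Suc N"
  shows "tail_prod N = (1 - \<xi> ^ Suc N) * tail_prod (Suc N)"
proof -
  have sm: "Suc N mod k = Suc (N mod k)"
    using assms order_pos by (simp add: mod_Suc dvd_eq_mod_eq_0 split: if_splits)
  then have "Suc (N mod k) \<le> k - 1"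
    using order_pos mod_less_divisor[of k "Suc N"] by linarith
  moreover have "\<xi> ^ Suc N = \<xi> ^ Suc (N mod k)" using power_mod[of "Suc N"] sm by simp
  ultimately show ?thesis
    unfolding tail_prod_def sm by (simp add: prod.atLeast_Suc_atMost del: power_Suc)
qed

lemma lead_const_closed_form:
  "lead_const N * (of_nat k ^ (2 * (N div k) + 1) * fact (N div k) * (-1) ^ N) =
     (-1) ^ (N div k) * fact N * tail_prod N"
proof (induction N)
  case 0
  show ?case using prod_one_minus_powers by (simp add: lead_const_def tail_prod_def)
next
  case (Suc N)
  define s where "s = N div k"
  show ?case
  proof (cases "k dvd Suc N")
    case True
    then have sd: "Suc N div k = Suc s" by (simp add: div_Suc s_def dvd_eq_mod_eq_0)
    have "Suc N = k * Suc s" using True sd by (metis dvd_mult_div_cancel)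
    then have "(of_nat (Suc N) :: complex) = of_nat k * of_nat (Suc s)" by (simp only: of_nat_mult)
    then have fact_Suc_N: "(fact (Suc N) :: complex) = of_nat k * of_nat (Suc s) * fact N"
      by (simp only: fact_Suc)
    have "lead_const (Suc N) = lead_const N"
      using True by (simp add: lead_const_def power_eq_1_iff)
    then have "lead_const (Suc N) * (of_nat k ^ (2 * Suc s + 1) * fact (Suc s) * (-1) ^ Suc N)
        = (lead_const N * (of_nat k ^ (2 * s + 1) * fact s * (-1) ^ N)) * (- (of_nat k ^ 2 * of_nat (Suc s)))"
      by (simp add: algebra_simps power_add power2_eq_square)
    also have "\<dots> = (-1) ^ s * fact N * (- (of_nat k ^ 2 * of_nat (Suc s)))"
      using Suc.IH tail_prod_Suc_dvd(1)[OF True] by (simp add: s_def)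
    also have "\<dots> = (-1) ^ Suc s * fact (Suc N) * of_nat k"
      unfolding fact_Suc_N by (simp add: algebra_simps power2_eq_square)
    finally show ?thesis unfolding sd tail_prod_Suc_dvd(2)[OF True] .
  next
    case False
    then have sd: "Suc N div k = s" by (simp add: div_Suc s_def dvd_eq_mod_eq_0)
    have "\<xi> ^ Suc N \<noteq> 1" unfolding power_eq_1_iff using False .
    then have ne: "1 - \<xi> ^ Suc N \<noteq> 0" "\<xi> ^ Suc N - 1 \<noteq> 0" by (simp_all del: power_Suc)
    have lead_Suc: "lead_const (Suc N) = lead_const N * (of_nat (Suc N) / (\<xi> ^ Suc N - 1))"
      using ne by (simp add: lead_const_def del: power_Suc)
    have "lead_const (Suc N) * (of_nat k ^ (2 * s + 1) * fact s * (-1) ^ Suc N)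
        = (lead_const N * (of_nat k ^ (2 * s + 1) * fact s * (-1) ^ N)) * (of_nat (Suc N) / (1 - \<xi> ^ Suc N))"
      unfolding lead_Suc using ne by (simp add: field_simps)
    also have "\<dots> = (-1) ^ s * fact N * tail_prod N * (of_nat (Suc N) / (1 - \<xi> ^ Suc N))"
      using Suc.IH by (simp add: s_def)
    also have "\<dots> = (-1) ^ s * fact (Suc N) * tail_prod (Suc N)"
      unfolding tail_prod_Suc_not_dvd[OF False] using ne by (simp add: field_simps)
    finally show ?thesis unfolding sd .
  qed
qed

lemma lead_const_eq:
  "\<xi> powi (- m) * ((-1) ^ N / fact N) * lead_const N =
     (-1) ^ (N div k) * \<xi> powi (- m) / (of_nat k ^ (2 * (N div k) + 1) * fact (N div k)) * tail_prod N"
proof -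
  have "(of_nat k ^ (2 * (N div k) + 1) * fact (N div k) * (-1) ^ N :: complex) \<noteq> 0"
    using order_pos by simp
  then have "lead_const N = (-1) ^ (N div k) * fact N * tail_prod N /
      (of_nat k ^ (2 * (N div k) + 1) * fact (N div k) * (-1) ^ N)"
    using lead_const_closed_form[of N] by (simp add: field_simps)
  then show ?thesis using order_pos by (simp add: field_simps)
qed

lemma sum_apostol_bernoulli_S_sum:
  "(\<Sum>r=0..k-1. apostol_bernoulli n (\<xi> ^ r) * S_sum k n r m N) =
     of_int (m + 1) * apostol_bernoulli n 1 + (\<Sum>i=1..N. of_nat i ^ n * apostol_bernoulli n (\<xi> ^ i))"
proof -
  have "apostol_bernoulli n (\<xi> ^ r) * S_sum k n r m N =
      (if r = 0 then of_int (m + 1) * apostol_bernoulli n 1 else 0) +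
      (\<Sum>j\<in>{x\<in>{1..N}. x mod k = r}. of_nat j ^ n * apostol_bernoulli n (\<xi> ^ j))"
    if r: "r \<in> {0..k-1}" for r
  proof -
    have "{j. 1 \<le> j \<and> j \<le> N \<and> j mod k = r mod k} = {x\<in>{1..N}. x mod k = r}"
      using r order_pos by auto
    moreover have "\<xi> ^ j = \<xi> ^ r" if "j mod k = r" for j
      using power_mod[of j] that by simp
    ultimately show ?thesis
      by (simp add: S_sum_def distrib_left sum_distrib_left mult.commute)
  qed
  then have "(\<Sum>r=0..k-1. apostol_bernoulli n (\<xi> ^ r) * S_sum k n r m N) =
      of_int (m + 1) * apostol_bernoulli n 1 +
      (\<Sum>r=0..k-1. \<Sum>j\<in>{x\<in>{1..N}. x mod k = r}. of_nat j ^ n * apostol_bernoulli n (\<xi> ^ j))"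
    by (simp add: sum.distrib sum.delta)
  also have "(\<Sum>r=0..k-1. \<Sum>j\<in>{x\<in>{1..N}. x mod k = r}. of_nat j ^ n * apostol_bernoulli n (\<xi> ^ j)) =
      (\<Sum>i=1..N. of_nat i ^ n * apostol_bernoulli n (\<xi> ^ i))"
    by (rule sum.group) (use order_pos in \<open>auto simp: less_Suc_eq_le[symmetric]\<close>)
  finally show ?thesis .
qed

end

section \<open>The substitution \<open>q = \<xi> e\<^sup>z\<close>\<close>

definition exp_substitution :: "complex \<Rightarrow> complex fps" where
  "exp_substitution \<xi> = fps_const \<xi> * (fps_exp 1 - 1)"

definition subst_series :: "complex \<Rightarrow> int \<Rightarrow> nat \<Rightarrow> complex fls" where
  "subst_series \<xi> m N =
     apostol_series 1 1 powi (m + 1) * (\<Prod>i=1..N. apostol_series (\<xi> ^ i) i) * fls_exp 1"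

lemma exp_substitution_nth_0 [simp]: "exp_substitution \<xi> $ 0 = 0"
  by (simp add: exp_substitution_def)

lemma exp_substitution_nth_1 [simp]: "exp_substitution \<xi> $ 1 = \<xi>"
  by (simp add: exp_substitution_def)

lemma exp_substitution_nonzero: "\<xi> \<noteq> 0 \<Longrightarrow> exp_substitution \<xi> \<noteq> 0"
  using exp_substitution_nth_1[of \<xi>] by force

lemma fls_compose_X_intpow_exp_substitution:
  assumes "\<xi> \<noteq> 0"
  shows "fls_compose_fps (fls_X_intpow a) (exp_substitution \<xi>) =
           fls_const (\<xi> powi a) * fls_X_intpow a * apostol_series 1 1 powi (- a)"
proof -
  have G: "exp_substitution \<xi> \<noteq> 0" using exp_substitution_nonzero[OF assms] .
  have "fps_to_fls (exp_substitution \<xi>) = fls_const \<xi> * (fls_X * inverse (apostol_series 1 1))"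
    using apostol_denom_eq[of 1 1]
    by (simp add: exp_substitution_def apostol_denom_def fls_exp_def fls_times_fps_to_fls)
  moreover have "fls_compose_fps (fls_X_intpow a) (exp_substitution \<xi>) = fps_to_fls (exp_substitution \<xi>) powi a"
    using fls_compose_fps_powi[OF G exp_substitution_nth_0, of fls_X a] by (simp add: fls_X_power_int)
  ultimately show ?thesis
    by (simp add: power_int_mult_distrib fls_const_power_int power_int_inverse fls_X_power_int
          power_int_minus mult.assoc)
qed

lemma fls_compose_inverse_qpoch_exp_substitution:
  assumes "\<xi> \<noteq> 0"
  shows "fls_compose_fps (1 / (\<Prod>i=1..N. 1 - (fls_const \<xi> + fls_X) ^ i)) (exp_substitution \<xi>) =
           fls_const ((-1) ^ N / fact N) * fls_X_intpow (- int N) * (\<Prod>i=1..N. apostol_series (\<xi> ^ i) i)"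
proof -
  have G: "exp_substitution \<xi> \<noteq> 0" using exp_substitution_nonzero[OF assms] .
  have "fls_const \<xi> + fps_to_fls (exp_substitution \<xi>) = fls_const \<xi> * fls_exp 1"
    by (simp add: exp_substitution_def fls_exp_def algebra_simps fls_times_fps_to_fls)
  then have "fls_compose_fps (1 / (\<Prod>i=1..N. 1 - (fls_const \<xi> + fls_X) ^ i)) (exp_substitution \<xi>) =
      (\<Prod>i=1..N. 1 / (1 - (fls_const \<xi> * fls_exp 1) ^ i))"
    using G by (simp add: fls_compose_fps_divide fls_compose_fps_prod fls_compose_fps_diff
        fls_compose_fps_power fls_compose_fps_add prod_dividef)
  also have "\<dots> = (\<Prod>i=1..N. fls_const (- 1 / of_nat i) * fls_X_intpow (-1) * apostol_series (\<xi> ^ i) i)"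
    by (intro prod.cong refl inverse_one_minus_exp_power) auto
  also have "\<dots> = fls_const (\<Prod>i=1..N. - 1 / of_nat i) * (\<Prod>i=1..N. fls_X_intpow (-1)) *
      (\<Prod>i=1..N. apostol_series (\<xi> ^ i) i)"
    by (simp only: prod.distrib fls_const_prod)
  also have "(\<Prod>i=1..N. - 1 / of_nat i) = ((\<Prod>i=1..N. -1) / (\<Prod>i=1..N. of_nat i) :: complex)"
    by (rule prod_dividef)
  also have "\<dots> = (-1) ^ N / fact N"
    by (simp add: fact_prod of_nat_prod)
  also have "(\<Prod>i=1..N. fls_X_intpow (-1)) = (fls_X_intpow (- int N) :: complex fls)"
    using fls_X_intpow_power[of "-1" N, where 'a=complex] by simp
  finally show ?thesis .
qed

text \<open>
  Shifting the coefficient to a residue and substituting \<open>q - \<xi> = \<xi>(e\<^sup>z - 1)\<close>: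
  \<open>1 - (\<xi> e\<^sup>z)\<^sup>i = - i z / apostol_series (\<xi>\<^sup>i) i\<close>, and \<open>dq = \<xi> e\<^sup>z dz\<close>.
\<close>
lemma A_coeff_eq_subst_series_nth:
  assumes "\<xi> \<noteq> 0"
  shows "A_coeff m \<xi> N = \<xi> powi (- m) * ((-1) ^ N / fact N) * subst_series \<xi> m N $$ (m + int N)"
proof -
  define G where "G = exp_substitution \<xi>"
  define L where "L = 1 / (\<Prod>i=1..N. 1 - (fls_const \<xi> + fls_X) ^ i)"
  have G: "G \<noteq> 0" "G $ 0 = 0" "G $ 1 \<noteq> 0"
    unfolding G_def exp_substitution_nth_0 exp_substitution_nth_1
    using assms exp_substitution_nonzero by simp_all
  have "laurent_expansion (\<lambda>q. 1 / qpoch q N) \<xi> = L"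
    unfolding L_def qpoch_def by (rule laurent_expansion_eqI) (intro laurent_expansion_intros)
  then have "A_coeff m \<xi> N = fls_residue (fls_X_intpow (- m - 1) * L)"
    unfolding A_coeff_def by (simp only:) (rule fls_residue_shift_nth)
  also have "\<dots> = fls_residue (fls_compose_fps (fls_X_intpow (- m - 1) * L) G * fps_to_fls (fps_deriv G))"
    by (rule fls_residue_compose_fps[symmetric, OF G(2,3)])
  also have "fls_compose_fps (fls_X_intpow (- m - 1) * L) G * fps_to_fls (fps_deriv G) =
      fls_const (\<xi> powi (- m - 1) * \<xi> * ((-1) ^ N / fact N)) *
      (fls_X_intpow (- m - 1) * fls_X_intpow (- int N)) * subst_series \<xi> m N"
  proof -
    have "fps_to_fls (fps_deriv G) = fls_const \<xi> * fls_exp 1"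
      by (simp add: G_def exp_substitution_def fls_exp_def fls_times_fps_to_fls)
    then show ?thesis
      unfolding fls_compose_fps_mult[OF G(1,2)]
      unfolding L_def G_def fls_compose_X_intpow_exp_substitution[OF assms]
        fls_compose_inverse_qpoch_exp_substitution[OF assms]
      by (simp only: subst_series_def fls_const_mult_const[symmetric] ac_simps minus_diff_eq
            diff_minus_eq_add)
  qed
  also have "fls_X_intpow (- m - 1) * fls_X_intpow (- int N) = (fls_X_intpow (- (m + int N) - 1) :: complex fls)"
    by (simp only: fls_X_intpow_times_fls_X_intpow) (simp add: algebra_simps)
  also have "\<xi> powi (- m - 1) * \<xi> = \<xi> powi (- m)"
    using assms by (simp add: power_int_diff)
  finally show ?thesis
    by (simp only: mult.assoc fls_residue_fls_const_times fls_residue_shift_nth[symmetric])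
qed

lemma subst_series_nonzero: "subst_series \<xi> m N \<noteq> 0"
  using apostol_series_nonzero fls_exp_nonzero
  by (simp add: subst_series_def prod_zero_iff)

lemma fls_log_deriv_subst_series:
  "fls_log_deriv (subst_series \<xi> m N) =
     fls_const (of_int (m + 1)) * (1 - apostol_series 1 1 - fls_X)
     + (\<Sum>i=1..N. 1 - apostol_series (\<xi> ^ i) i - fls_const (of_nat i) * fls_X) + fls_X"
proof -
  have nz: "\<And>i. i \<in> {1..N} \<Longrightarrow> apostol_series (\<xi> ^ i) i \<noteq> 0" by (simp add: apostol_series_nonzero)
  have "fls_log_deriv (\<Prod>i=1..N. apostol_series (\<xi> ^ i) i) =
      (\<Sum>i=1..N. fls_log_deriv (apostol_series (\<xi> ^ i) i))"
    by (rule fls_log_deriv_prod) (simp_all add: nz)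
  also have "\<dots> = (\<Sum>i=1..N. 1 - apostol_series (\<xi> ^ i) i - fls_const (of_nat i) * fls_X)"
    by (intro sum.cong refl) (simp add: fls_log_deriv_apostol_series)
  finally show ?thesis
    using nz apostol_series_nonzero[of 1 1] fls_exp_nonzero[of 1]
    by (simp add: subst_series_def fls_log_deriv_mult fls_log_deriv_powi fls_of_int
          fls_log_deriv_apostol_series fls_log_deriv_fls_exp_1 prod_zero_iff)
qed

lemma fls_log_deriv_subst_series_nth_neg:
  "n < 0 \<Longrightarrow> fls_log_deriv (subst_series \<xi> m N) $$ n = 0"
  by (simp add: fls_log_deriv_subst_series fls_nth_sum apostol_series_nth_neg)

lemma fls_log_deriv_subst_series_nth_0:
  "fls_log_deriv (subst_series \<xi> m N) $$ 0 = of_int (\<Sum>i=1..N. if \<xi> ^ i = 1 then 0 else 1)"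
  unfolding fls_log_deriv_subst_series of_int_sum
  by (auto simp: fls_nth_sum apostol_series_nth_0 intro!: sum.cong)

lemma fls_log_deriv_subst_series_nth_pos:
  assumes "p \<ge> 1"
  shows "fls_log_deriv (subst_series \<xi> m N) $$ int p =
           (if p = 1 then - of_int m - of_nat (N * (N + 1)) / 2 else 0) -
           (of_int (m + 1) * apostol_bernoulli p 1 +
            (\<Sum>i=1..N. of_nat i ^ p * apostol_bernoulli p (\<xi> ^ i))) / fact p"
proof -
  have "2 * (\<Sum>i=1..N. of_nat i :: complex) = of_nat N * (of_nat N + 1)"
    using double_gauss_sum_from_Suc_0[of N] by simp
  then have gauss: "(\<Sum>i=1..N. of_nat i :: complex) = of_nat (N * (N + 1)) / 2"
    by (simp add: field_simps)
  have "fls_log_deriv (subst_series \<xi> m N) $$ int p =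
      - of_int (m + 1) * apostol_series 1 1 $$ int p - (\<Sum>i=1..N. apostol_series (\<xi> ^ i) i $$ int p)
      + (if p = 1 then - of_int m - (\<Sum>i=1..N. of_nat i) else 0)"
    using assms
    by (auto simp: fls_log_deriv_subst_series fls_nth_sum sum.distrib sum_subtractf algebra_simps
          fls_of_nat_nth)
  also have "\<dots> = (if p = 1 then - of_int m - of_nat (N * (N + 1)) / 2 else 0) -
           (of_int (m + 1) * apostol_bernoulli p 1 +
            (\<Sum>i=1..N. of_nat i ^ p * apostol_bernoulli p (\<xi> ^ i))) / fact p"
    unfolding gauss
    by (simp add: apostol_series_nth add_divide_distrib diff_divide_distrib sum_divide_distrib
          algebra_simps)
  finally show ?thesis .
qed

context primitive_root_unity
begin

lemma fls_subdegree_subst_series: "fls_subdegree (subst_series \<xi> m N) = int N - int (N div k)"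
  and fls_lead_coeff_subst_series: "fls_lead_coeff (subst_series \<xi> m N) = lead_const N"
proof -
  define P where "P = (\<Prod>i=1..N. apostol_series (\<xi> ^ i) i)"
  define D where "D = apostol_series 1 1 powi (m + 1)"
  have nz: "\<And>i. i \<in> {1..N} \<Longrightarrow> apostol_series (\<xi> ^ i) i \<noteq> 0" by (simp add: apostol_series_nonzero)
  have D: "D \<noteq> 0" "fls_subdegree D = 0" "fls_lead_coeff D = 1"
    using apostol_series_nonzero[of 1 1] apostol_series_subdegree_lead_coeff[of 1 1]
      fls_lead_coeff_powi[of "apostol_series 1 1" "m + 1"] by (simp_all add: D_def)
  have E: "fls_exp 1 \<noteq> 0" "fls_subdegree (fls_exp 1) = 0" "fls_lead_coeff (fls_exp 1) = 1"
    using fls_exp_nonzero[of 1] by (simp_all add: fls_exp_def fls_subdegree_fls_to_fps)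
  have "fls_subdegree P = (\<Sum>i=1..N. fls_subdegree (apostol_series (\<xi> ^ i) i))"
    unfolding P_def by (rule fls_subdegree_prod) (rule nz)
  also have "\<dots> = (\<Sum>i=1..N. (if \<xi> ^ i = 1 then 0 else 1 :: int))"
    by (intro sum.cong refl) (simp add: apostol_series_subdegree_lead_coeff(1))
  also have "\<dots> = int N - int (N div k)" by (rule count_powers_ne_1)
  finally have P: "P \<noteq> 0" "fls_subdegree P = int N - int (N div k)"
    using nz by (simp_all add: P_def prod_zero_iff)
  have "fls_lead_coeff P = (\<Prod>i=1..N. fls_lead_coeff (apostol_series (\<xi> ^ i) i))"
    unfolding P_def by (rule fls_lead_coeff_prod) (simp_all add: nz)
  also have "\<dots> = lead_const N"
    unfolding lead_const_def
    by (intro prod.cong refl) (simp add: apostol_series_subdegree_lead_coeff(2) del: fls_times_base)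
  finally have "fls_lead_coeff P = lead_const N" .
  then have DP: "D * P \<noteq> 0" "fls_subdegree (D * P) = int N - int (N div k)"
      "fls_lead_coeff (D * P) = lead_const N"
    using D P fls_lead_coeff_mult[OF D(1) P(1)] by simp_all
  then show "fls_subdegree (subst_series \<xi> m N) = int N - int (N div k)"
    and "fls_lead_coeff (subst_series \<xi> m N) = lead_const N"
    using E fls_lead_coeff_mult[OF DP(1) E(1)]
    unfolding subst_series_def D_def[symmetric] P_def[symmetric] by simp_all
qed

lemma A_coeff_eq_normalize_subst_series_nth:
  "A_coeff m \<xi> N = \<xi> powi (- m) * ((-1) ^ N / fact N) * lead_const N *
                      fls_normalize (subst_series \<xi> m N) $$ (int (N div k) + m)"
proof -
  have "subst_series \<xi> m N $$ (int N - int (N div k)) = lead_const N"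
    using fls_lead_coeff_subst_series by (simp add: fls_subdegree_subst_series)
  moreover have "lead_const N \<noteq> 0"
    using subst_series_nonzero fls_lead_coeff_subst_series nth_fls_subdegree_nonzero by metis
  ultimately show ?thesis
    by (simp add: A_coeff_eq_subst_series_nth[OF nonzero] fls_normalize_nth fls_subdegree_subst_series)
qed

lemma of_nat_mult_X_term:
  assumes "p \<ge> 1"
  shows "of_nat p * X_term k \<xi> m N p =
           (if p = 1 then - of_int m - of_nat (N * (N + 1)) / 2 else 0) -
           (of_int (m + 1) * apostol_bernoulli p 1 +
            (\<Sum>i=1..N. of_nat i ^ p * apostol_bernoulli p (\<xi> ^ i))) / fact p"
proof -
  have "of_nat p * X_term k \<xi> m N p =
      of_nat p * (if p = 1 then - of_int m - of_nat (N * (N + 1)) / 2 else 0) -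
      of_nat p * (\<Sum>r=0..k-1. apostol_bernoulli p (\<xi> ^ r) * S_sum k p r m N / (of_nat p * fact p))"
    by (simp add: X_term_def right_diff_distrib)
  also have "of_nat p * (\<Sum>r=0..k-1. apostol_bernoulli p (\<xi> ^ r) * S_sum k p r m N / (of_nat p * fact p))
      = (\<Sum>r=0..k-1. apostol_bernoulli p (\<xi> ^ r) * S_sum k p r m N) / fact p"
    using assms by (simp add: sum_distrib_left sum_divide_distrib field_simps)
  finally show ?thesis unfolding sum_apostol_bernoulli_S_sum by auto
qed

lemma fls_log_deriv_normalize_subst_series:
  "fls_log_deriv (fls_normalize (subst_series \<xi> m N)) =
     fls_X * fps_to_fls (Abs_fps (\<lambda>n. of_nat (n + 1) * X_term k \<xi> m N (n + 1)))"
proof (rule fls_eqI)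
  fix n :: int
  have L: "fls_log_deriv (fls_normalize (subst_series \<xi> m N)) $$ n =
      fls_log_deriv (subst_series \<xi> m N) $$ n - (if n = 0 then of_int (int N - int (N div k)) else 0)"
    by (simp add: fls_log_deriv_normalize subst_series_nonzero fls_subdegree_subst_series fls_of_int_nth
          fls_of_nat_nth)
  consider "n < 0" | "n = 0" | p where "p \<ge> 1" "n = int p"
    by (cases n rule: int_cases3) auto
  then show "fls_log_deriv (fls_normalize (subst_series \<xi> m N)) $$ n =
      (fls_X * fps_to_fls (Abs_fps (\<lambda>n. of_nat (n + 1) * X_term k \<xi> m N (n + 1)))) $$ n"
  proof cases
    case 1
    then show ?thesis by (simp add: L fls_log_deriv_subst_series_nth_neg fls_X_times_conv_shift)
  next
    case 2
    then show ?thesis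
      unfolding L using fls_log_deriv_subst_series_nth_0[of \<xi> m N, unfolded count_powers_ne_1]
      by (simp add: fls_X_times_conv_shift)
  next
    case 3
    then show ?thesis
      unfolding L
      using of_nat_mult_X_term[of p m N] fls_log_deriv_subst_series_nth_pos[of p \<xi> m N]
      by (simp add: fls_X_times_conv_shift nat_diff_distrib')
  qed
qed

end

theorem proposition5p2:
  fixes k N :: nat and m :: int and \<xi> :: complex
  assumes "k \<ge> 1"
    and "\<xi> ^ k = 1" and "\<forall>j. 0 < j \<and> j < k \<longrightarrow> \<xi> ^ j \<noteq> 1"
    and "N \<ge> 1"
    and "int (N div k) + m \<ge> 0"
  shows "A_coeff m \<xi> N =
    (-1) ^ (N div k) * \<xi> powi (- m) / (of_nat k ^ (2 * (N div k) + 1) * fact (N div k))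
    * (\<Prod>w=N mod k + 1..k-1. 1 - \<xi> ^ w)
    * (\<Sum>j\<in>weighted_partitions (nat (int (N div k) + m)).
         \<Prod>i=1..nat (int (N div k) + m). X_term k \<xi> m N i ^ j i / fact (j i))"
proof -
  interpret primitive_root_unity k \<xi> using assms(1-3) by unfold_locales
  define W where "W = fls_normalize (subst_series \<xi> m N)"
  have W: "W $$ 0 = 1" "fls_subdegree W = 0"
    unfolding W_def using subst_series_nonzero by (rule fls_normalize_nth_0, rule fls_subdegree_normalize)
  then have W_nonzero: "W \<noteq> 0" by (intro fls_nonzeroI[of _ 0]) simp
  have "fps_deriv (fls_regpart W) =
      fls_regpart W * Abs_fps (\<lambda>n. of_nat (n + 1) * X_term k \<xi> m N (n + 1))"
    using W W_nonzero unfolding W_def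
    by (intro fps_deriv_regpart_eq_if_fls_log_deriv_eq fls_log_deriv_normalize_subst_series)
  then have "fls_regpart W $ nat (int (N div k) + m) =
      (\<Sum>j\<in>weighted_partitions (nat (int (N div k) + m)).
         \<Prod>i=1..nat (int (N div k) + m). X_term k \<xi> m N i ^ j i / fact (j i))"
    using W by (intro fps_nth_eq_weighted_partitions_sum) simp_all
  moreover have "W $$ (int (N div k) + m) = fls_regpart W $ nat (int (N div k) + m)"
    using assms(5) by simp
  ultimately show ?thesis
    unfolding A_coeff_eq_normalize_subst_series_nth W_def[symmetric] lead_const_eq tail_prod_def
    by simp
qed

end
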